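(* Let "opt" denote either "mV" or "mVc", and suppose the subsampling probabilities are $\pi_i=\pi_i^{opt}=r\frac{h_i^{opt}\wedge M}{\sum_{j=1}^n(h_j^{opt}\wedge M)}$ with $k$ and $M$ defined from $\{h_i^{opt}\}$ as in the context. Index the data points by the increasing order of $h^{opt}$, so that $h^{opt}_{(i)}$ is the $i$-th smallest value and $h^{mV}_{(i)}$ denotes the value of $h^{mV}$ at that same data point. Then the asymptotic MSE of $\tilde\theta$ given $\mathcal{D}_n$, namely $\mathrm{tr}(\tilde\Sigma)$, equals $$\frac{4}{n^2(r-k)}\Big[\sum_{i=1}^{n-k}h^{opt}_{(i)}\Big]\sum_{i=1}^{n-k}\frac{[h^{mV}_{(i)}]^2}{h^{opt}_{(i)}}-\frac{4}{n^2}\sum_{i=1}^{n-k}[h^{mV}_{(i)}]^2.$$ In particular, for opt $=$ mV this minimum value of $\mathrm{tr}(\tilde\Sigma)$ over all admissible probabilities equals $$\frac{4}{n^2(r-k)}\Big[\sum_{i=1}^{n-k}h^{mV}_{(i)}\Big]^2-\frac{4}{n^2}\sum_{i=1}^{n-k}[h^{mV}_{(i)}]^2.$$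
   Context: Physical data $\mathcal{D}_n=\{(x_i,y_i^p)\}_{i=1}^n$; $\hat y^s(x,\theta)$ is a surrogate of a computer model, differentiable in $\theta\in\Theta\subset\mathbb{R}^q$; $\hat\theta=\arg\min_{\theta\in\Theta}\frac1n\sum_i[y_i^p-\hat y^s(x_i,\theta)]^2$; $g_i=\nabla_\theta\hat y^s(x_i,\hat\theta)$; $\tilde J=\frac1n\sum_i\frac{\partial^2[y_i^p-\hat y^s(x_i,\hat\theta)]^2}{\partial\theta\partial\theta^T}$ (assumed invertible). $h_i^{mV}=|y_i^p-\hat y^s(x_i,\hat\theta)|(g_i^T\tilde J^{-2}g_i)^{1/2}$, $h_i^{mVc}=|y_i^p-\hat y^s(x_i,\hat\theta)|(g_i^Tg_i)^{1/2}$. Given $h^{opt}$ (either $h^{mV}$ or $h^{mVc}$) with order statistics $h^{opt}_{(1)}\le\dots\le h^{opt}_{(n)}$, $h^{opt}_{(n+1)}=\infty$, $r\in\{1,\dots,n-1\}$ and $h^{opt}_{(n-r)}>0$: $k=\min\{s:0\le s\le r,(r-s)h^{opt}_{(n-s)}<\sum_{i=1}^{n-s}h^{opt}_{(i)}\}$, $M=\frac{1}{r-k}\sum_{i=1}^{n-k}h^{opt}_{(i)}$. For probabilities $\pi_i\in(0,1]$ with $\sum_i\pi_i=r$: $\tilde V=\frac{4}{n^2}\sum_i\frac{1-\pi_i}{\pi_i}[y_i^p-\hat y^s(x_i,\hat\theta)]^2g_ig_i^T$, $\tilde\Sigma=\tilde J^{-1}\tilde V\tilde J^{-1}$. *)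

theory Defs
  imports "HOL-Analysis.Analysis"
begin

text \<open>Data points are indexed by 0..n-1. Order statistics hs are 1-indexed: hs 1 \<le> ... \<le> hs n.\<close>

definition kidx :: "(nat \<Rightarrow> real) \<Rightarrow> nat \<Rightarrow> nat \<Rightarrow> nat" where
  "kidx hs n r = (LEAST s. s \<le> r \<and> real (r - s) * hs (n - s) < (\<Sum>i=1..n-s. hs i))"

definition Mthr :: "(nat \<Rightarrow> real) \<Rightarrow> nat \<Rightarrow> nat \<Rightarrow> real" where
  "Mthr hs n r = (\<Sum>i=1..n - kidx hs n r. hs i) / real (r - kidx hs n r)"

definition outer :: "real^'q \<Rightarrow> real^'q \<Rightarrow> real^'q^'q" where
  "outer u v = (\<chi> a b. u $ a * v $ b)"

definition loss :: "nat \<Rightarrow> ('x \<Rightarrow> real^'q \<Rightarrow> real) \<Rightarrow> (nat \<Rightarrow> 'x) \<Rightarrow> (nat \<Rightarrow> real)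
    \<Rightarrow> real^'q \<Rightarrow> real" where
  "loss n ys x yp \<theta> = (1 / real n) * (\<Sum>i<n. (yp i - ys (x i) \<theta>)^2)"

definition is_hessian_at :: "(real^'q \<Rightarrow> real) \<Rightarrow> real^'q^'q \<Rightarrow> real^'q \<Rightarrow> bool" where
  "is_hessian_at L J th \<longleftrightarrow> (\<exists>G. (\<forall>\<^sub>F \<theta> in nhds th. (L has_derivative (\<lambda>d. G \<theta> \<bullet> d)) (at \<theta>))
       \<and> (G has_derivative (\<lambda>d. J *v d)) (at th))"

end

theory Submission
  imports Defs
begin

(* With pi_i proportional to min (h_i, M), the defining property of k says that the capped
   values min (h_(i), M) sum to r M with exactly the k largest ones capped.  Hence
   pi_(i) = h_(i) / M below the cap and pi_(i) = 1 above it, so the capped points drop out of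
   tr Sigma = 4/n^2 sum_i (1 - pi_i) / pi_i * e_i^2 g_i^T J^-2 g_i, and every other point
   contributes M (h^mV)^2 / h^opt - (h^mV)^2.  Reading e_i^2 g_i^T J^-2 g_i as (h^mV_i)^2 needs
   g^T J^-2 g >= 0, i.e. a symmetric J: this is Schwarz's theorem for a Hessian that exists only
   at the point theta, proved by a mean-value estimate of second differences. *)

lemma second_difference_mean_value:
  fixes L :: "'a::real_inner \<Rightarrow> real"
  assumes "0 \<le> t"
    and dL1: "\<And>s. 0 \<le> s \<Longrightarrow> s \<le> t \<Longrightarrow>
               (L has_derivative (\<lambda>d. G (x + s *\<^sub>R u + t *\<^sub>R v) \<bullet> d)) (at (x + s *\<^sub>R u + t *\<^sub>R v))"
    and dL2: "\<And>s. 0 \<le> s \<Longrightarrow> s \<le> t \<Longrightarrow>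
               (L has_derivative (\<lambda>d. G (x + s *\<^sub>R u) \<bullet> d)) (at (x + s *\<^sub>R u))"
  obtains \<xi> where "0 \<le> \<xi>" "\<xi> \<le> t"
    "L (x + t *\<^sub>R u + t *\<^sub>R v) - L (x + t *\<^sub>R u) - L (x + t *\<^sub>R v) + L x
       = t * ((G (x + \<xi> *\<^sub>R u + t *\<^sub>R v) - G (x + \<xi> *\<^sub>R u)) \<bullet> u)"
proof -
  define \<phi> where "\<phi> s = L (x + s *\<^sub>R u + t *\<^sub>R v) - L (x + s *\<^sub>R u)" for s
  have "(\<phi> has_derivative (\<lambda>h. G (x + s *\<^sub>R u + t *\<^sub>R v) \<bullet> (h *\<^sub>R u) - G (x + s *\<^sub>R u) \<bullet> (h *\<^sub>R u)))
          (at s within {0..t})" if "0 \<le> s" "s \<le> t" for s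
  proof -
    have "((\<lambda>s. x + s *\<^sub>R u + t *\<^sub>R v) has_derivative (\<lambda>h. h *\<^sub>R u)) (at s within {0..t})"
      and "((\<lambda>s. x + s *\<^sub>R u) has_derivative (\<lambda>h. h *\<^sub>R u)) (at s within {0..t})"
      by (auto intro!: derivative_eq_intros)
    from has_derivative_compose[OF this(1) dL1[OF that]] has_derivative_compose[OF this(2) dL2[OF that]]
    show ?thesis
      unfolding \<phi>_def by (rule has_derivative_diff)
  qed
  from mvt_very_simple[OF \<open>0 \<le> t\<close> this] obtain \<xi> where "\<xi> \<in> {0..t}"
    "\<phi> t - \<phi> 0 = G (x + \<xi> *\<^sub>R u + t *\<^sub>R v) \<bullet> ((t - 0) *\<^sub>R u) - G (x + \<xi> *\<^sub>R u) \<bullet> ((t - 0) *\<^sub>R u)"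
    by blast
  moreover have "\<phi> t - \<phi> 0 = L (x + t *\<^sub>R u + t *\<^sub>R v) - L (x + t *\<^sub>R u) - L (x + t *\<^sub>R v) + L x"
    by (simp add: \<phi>_def)
  ultimately show thesis
    by (intro that[of \<xi>]) (simp_all add: inner_diff_left right_diff_distrib)
qed

lemma second_difference_approx:
  fixes L :: "'a::real_inner \<Rightarrow> real" and G :: "'a \<Rightarrow> 'a"
  assumes H: "linear H"
    and dL: "\<And>y. norm (y - x) < \<delta> \<Longrightarrow> (L has_derivative (\<lambda>d. G y \<bullet> d)) (at y)"
    and dG: "\<And>y. norm (y - x) < \<delta> \<Longrightarrow> norm (G y - G x - H (y - x)) \<le> e * norm (y - x)"
    and e: "0 \<le> e" and t: "0 < t" and small: "t * (norm u + norm v + 1) < \<delta>"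
  shows "\<bar>L (x + t *\<^sub>R u + t *\<^sub>R v) - L (x + t *\<^sub>R u) - L (x + t *\<^sub>R v) + L x - t^2 * (H v \<bullet> u)\<bar>
           \<le> 2 * e * t^2 * (norm u + norm v + 1)^2"
proof -
  define B where "B = norm u + norm v + 1"
  have B: "0 \<le> B" "norm u \<le> B" "t * B < \<delta>" using small by (simp_all add: B_def)
  have near: "norm (s *\<^sub>R u + t *\<^sub>R v) \<le> t * B" "norm (s *\<^sub>R u) \<le> t * B" if "0 \<le> s" "s \<le> t" for s
  proof -
    have "norm (s *\<^sub>R u) \<le> t * norm u" using that by (simp add: mult_right_mono)
    moreover have "norm (s *\<^sub>R u + t *\<^sub>R v) \<le> norm (s *\<^sub>R u) + t * norm v"
      using norm_triangle_ineq[of "s *\<^sub>R u" "t *\<^sub>R v"] t by simp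
    moreover have "t * norm u + t * norm v \<le> t * B" "t * norm u \<le> t * B"
      using t by (simp_all add: B_def distrib_left)
    ultimately show "norm (s *\<^sub>R u + t *\<^sub>R v) \<le> t * B" "norm (s *\<^sub>R u) \<le> t * B"
      by linarith+
  qed
  have close: "norm (s *\<^sub>R u + t *\<^sub>R v) < \<delta>" "norm (s *\<^sub>R u) < \<delta>" if "0 \<le> s" "s \<le> t" for s
    using near[OF that] B by linarith+
  define R where "R y = G y - G x - H (y - x)" for y
  have R: "norm (R (x + a)) \<le> e * (t * B)" if "norm a \<le> t * B" for a
  proof -
    have "norm (R (x + a)) \<le> e * norm a" using dG[of "x + a"] that B by (simp add: R_def)
    also have "\<dots> \<le> e * (t * B)" using that e by (rule mult_left_mono)
    finally show ?thesis .
  qed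
  obtain \<xi> where \<xi>: "0 \<le> \<xi>" "\<xi> \<le> t" and mv:
    "L (x + t *\<^sub>R u + t *\<^sub>R v) - L (x + t *\<^sub>R u) - L (x + t *\<^sub>R v) + L x
       = t * ((G (x + \<xi> *\<^sub>R u + t *\<^sub>R v) - G (x + \<xi> *\<^sub>R u)) \<bullet> u)"
    by (rule second_difference_mean_value[of t L G x u v])
      (use t close in \<open>auto intro!: dL simp: add.assoc\<close>)
  define a where "a = \<xi> *\<^sub>R u + t *\<^sub>R v"
  define b where "b = \<xi> *\<^sub>R u"
  have "G (x + a) - G (x + b) = t *\<^sub>R H v + (R (x + a) - R (x + b))"
    unfolding R_def a_def b_def by (simp add: linear_add[OF H] linear_scale[OF H])
  with mv have diff: "L (x + t *\<^sub>R u + t *\<^sub>R v) - L (x + t *\<^sub>R u) - L (x + t *\<^sub>R v) + L x - t^2 * (H v \<bullet> u)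
      = t * ((R (x + a) - R (x + b)) \<bullet> u)"
    unfolding a_def b_def by (simp add: power2_eq_square algebra_simps)
  have "\<bar>(R (x + a) - R (x + b)) \<bullet> u\<bar> \<le> (norm (R (x + a)) + norm (R (x + b))) * norm u"
    using Cauchy_Schwarz_ineq2[of "R (x + a) - R (x + b)" u] norm_triangle_ineq4[of "R (x + a)" "R (x + b)"]
    by (meson mult_right_mono norm_ge_zero order_trans)
  also have "\<dots> \<le> (2 * e * (t * B)) * B"
    using R[of a] R[of b] near \<xi> B e t unfolding a_def b_def
    by (intro mult_mono) auto
  finally show ?thesis
    using t unfolding diff B_def[symmetric] by (simp add: abs_mult power2_eq_square mult_left_mono mult_ac)
qed

lemma derivative_of_gradient_symmetric:
  fixes L :: "'a::real_inner \<Rightarrow> real" and G :: "'a \<Rightarrow> 'a"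
  assumes dL: "\<forall>\<^sub>F y in nhds x. (L has_derivative (\<lambda>d. G y \<bullet> d)) (at y)"
    and dG: "(G has_derivative H) (at x)"
  shows "H u \<bullet> v = H v \<bullet> u"
proof -
  obtain d0 where d0: "0 < d0" "\<And>y. norm (y - x) < d0 \<Longrightarrow> (L has_derivative (\<lambda>d. G y \<bullet> d)) (at y)"
    using dL unfolding eventually_nhds_metric dist_norm by blast
  have H: "linear H" using dG by (rule has_derivative_linear)
  define B where "B = norm u + norm v + 1"
  have B: "0 < B" by (simp add: B_def add_nonneg_pos)
  have "\<bar>H u \<bullet> v - H v \<bullet> u\<bar> \<le> 0 + \<epsilon>" if "0 < \<epsilon>" for \<epsilon>
  proof -
    define e where "e = \<epsilon> / (4 * B^2)"
    have e: "0 < e" using that B by (simp add: e_def)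
    obtain d1 where d1: "0 < d1"
      "\<And>y. norm (y - x) < d1 \<Longrightarrow> norm (G y - G x - H (y - x)) \<le> e * norm (y - x)"
      using dG e unfolding has_derivative_at_alt by blast
    define t where "t = min d0 d1 / (2 * B)"
    have m: "0 < min d0 d1" using d0 d1 by simp
    then have t: "0 < t" using B by (simp add: t_def)
    have "t * B = min d0 d1 / 2" using B by (simp add: t_def)
    then have tB: "t * B < min d0 d1" using m by linarith
    have "norm v + norm u + 1 = B" by (simp add: B_def)
    then have "\<bar>t^2 * (H u \<bullet> v) - t^2 * (H v \<bullet> u)\<bar> \<le> 4 * e * t^2 * B^2"
      using second_difference_approx[OF H, of x "min d0 d1" L G e t u v]
        second_difference_approx[OF H, of x "min d0 d1" L G e t v u] d0 d1 e t tB
      by (simp add: B_def[symmetric] add.commute add.left_commute)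
    then have "t^2 * \<bar>H u \<bullet> v - H v \<bullet> u\<bar> \<le> \<epsilon> * t^2"
      using B by (simp add: abs_mult right_diff_distrib[symmetric] e_def)
    then show ?thesis using t by simp
  qed
  then show ?thesis using field_le_epsilon[of "\<bar>H u \<bullet> v - H v \<bullet> u\<bar>" 0] by simp
qed

lemma is_hessian_at_symmetric:
  assumes "is_hessian_at L J th"
  shows "transpose J = J"
proof -
  obtain G where G: "\<forall>\<^sub>F \<theta> in nhds th. (L has_derivative (\<lambda>d. G \<theta> \<bullet> d)) (at \<theta>)"
    "(G has_derivative (\<lambda>d. J *v d)) (at th)"
    using assms unfolding is_hessian_at_def by blast
  have "J $ i $ j = J $ j $ i" for i j
    using derivative_of_gradient_symmetric[OF G, of "axis j 1" "axis i 1"] by (simp add: inner_axis matrix_vector_mult_basis column_def)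
  then show ?thesis by (simp add: vec_eq_iff transpose_def)
qed

lemma transpose_matrix_inv_symmetric:
  fixes J :: "real^'n^'n"
  assumes "invertible J" "transpose J = J"
  shows "transpose (matrix_inv J) = matrix_inv J"
proof -
  define A where "A = matrix_inv J"
  have inv: "J ** A = mat 1" "A ** J = mat 1"
    using someI_ex[OF assms(1)[unfolded invertible_def]] unfolding A_def matrix_inv_def by auto
  have "transpose A ** J = transpose (J ** A)"
    using assms(2) by (metis matrix_transpose_mul)
  then have "transpose A ** J = mat 1" using inv by simp
  then have "transpose A = A ** (J ** transpose A)" using inv
    by (metis matrix_mul_assoc matrix_mul_rid)
  also have "J ** transpose A = mat 1"
    by (metis assms(2) inv(2) matrix_transpose_mul transpose_mat)
  finally show ?thesis by (simp add: A_def)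
qed

lemma quadratic_form_square_nonneg:
  fixes A :: "real^'n^'n"
  assumes "transpose A = A"
  shows "0 \<le> g \<bullet> ((A ** A) *v g)"
proof -
  have "g \<bullet> ((A ** A) *v g) = (g v* A) \<bullet> (A *v g)"
    by (simp add: matrix_vector_mul_assoc[symmetric] dot_lmul_matrix)
  also have "g v* A = A *v g" using assms vector_transpose_matrix[of g A] by simp
  finally show ?thesis by simp
qed

lemma trace_sandwich_outer:
  fixes A :: "real^'n^'n"
  shows "trace (A ** outer g g ** A) = g \<bullet> ((A ** A) *v g)"
proof -
  have "trace (A ** outer g g ** A) = (\<Sum>a\<in>UNIV. \<Sum>c\<in>UNIV. \<Sum>b\<in>UNIV. A$a$b * g$b * g$c * A$c$a)"
    by (simp add: trace_def matrix_matrix_mult_def outer_def sum_distrib_right mult.assoc)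
  also have "\<dots> = (\<Sum>c\<in>UNIV. \<Sum>b\<in>UNIV. \<Sum>a\<in>UNIV. A$a$b * g$b * g$c * A$c$a)"
    by (rule trans[OF sum.swap], rule sum.cong[OF refl], rule sum.swap)
  also have "\<dots> = g \<bullet> ((A ** A) *v g)"
    by (simp add: inner_vec_def matrix_matrix_mult_def matrix_vector_mult_def
        sum_distrib_left sum_distrib_right mult_ac)
  finally show ?thesis .
qed

lemma linear_trace_sandwich: "linear (\<lambda>X :: real^'n^'n. trace (A ** X ** A))"
  by (rule linearI) (simp_all add: trace_def matrix_matrix_mult_def
      sum_distrib_left sum_distrib_right algebra_simps sum.distrib)

lemma trace_sandwich_sum_outer:
  fixes A :: "real^'n^'n"
  assumes "finite I"
  shows "trace (A ** (c *\<^sub>R (\<Sum>i\<in>I. d i *\<^sub>R outer (g i) (g i))) ** A)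
           = c * (\<Sum>i\<in>I. d i * (g i \<bullet> ((A ** A) *v g i)))"
  using linear_sum[OF linear_trace_sandwich[of A], of "\<lambda>i. d i *\<^sub>R outer (g i) (g i)" I]
  by (simp add: linear_scale[OF linear_trace_sandwich] trace_sandwich_outer)

lemma sum_bij_betw_shift:
  fixes n :: nat
  assumes "bij_betw \<sigma> {..<n} {..<n}"
  shows "(\<Sum>j<n. f j) = (\<Sum>i=1..n. f (\<sigma> (i - 1)))"
proof -
  have "(\<Sum>j<n. f j) = (\<Sum>j<n. f (\<sigma> j))"
    using sum.reindex_bij_betw[OF assms, of f] by simp
  also have "\<dots> = (\<Sum>i=1..n. f (\<sigma> (i - 1)))"
    using sum.atLeast1_atMost_eq[of "\<lambda>i. f (\<sigma> (i - 1))" n] by simp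
  finally show ?thesis .
qed

context
  fixes hs :: "nat \<Rightarrow> real" and n r :: nat
  assumes hs_nonneg: "\<And>i. 1 \<le> i \<Longrightarrow> i \<le> n \<Longrightarrow> 0 \<le> hs i"
    and hs_mono: "\<And>i j. 1 \<le> i \<Longrightarrow> i \<le> j \<Longrightarrow> j \<le> n \<Longrightarrow> hs i \<le> hs j"
    and r_pos: "1 \<le> r" and r_less: "r < n"
    and hs_pos: "0 < hs (n - r)"
begin

private lemma le_partial_sum: "1 \<le> m \<Longrightarrow> m \<le> n \<Longrightarrow> hs m \<le> (\<Sum>i=1..m. hs i)"
  by (rule member_le_sum) (use hs_nonneg in auto)

private lemma kidx_condition:
  "kidx hs n r \<le> r \<and> real (r - kidx hs n r) * hs (n - kidx hs n r) < (\<Sum>i=1..n - kidx hs n r. hs i)"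
  unfolding kidx_def
proof (rule LeastI[where k = r])
  have "hs (n - r) \<le> (\<Sum>i=1..n - r. hs i)" using r_less by (intro le_partial_sum) auto
  then show "r \<le> r \<and> real (r - r) * hs (n - r) < (\<Sum>i=1..n - r. hs i)"
    using hs_pos by simp
qed

private lemma kidx_minimal:
  assumes "s < kidx hs n r" "s \<le> r"
  shows "(\<Sum>i=1..n - s. hs i) \<le> real (r - s) * hs (n - s)"
  using not_less_Least[OF assms(1)[unfolded kidx_def]] assms(2) by (simp add: not_less)

lemma kidx_less: "kidx hs n r < r"
proof (rule ccontr)
  assume "\<not> kidx hs n r < r"
  then have "r - 1 < kidx hs n r" using kidx_condition r_pos by simp
  from kidx_minimal[OF this] have "(\<Sum>i=1..Suc (n - r). hs i) \<le> hs (Suc (n - r))"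
    using r_pos r_less by (simp add: Suc_diff_le)
  then have "(\<Sum>i=1..n - r. hs i) \<le> 0" by simp
  moreover have "hs (n - r) \<le> (\<Sum>i=1..n - r. hs i)" using r_less by (intro le_partial_sum) auto
  ultimately show False using hs_pos by simp
qed

lemma less_Mthr:
  assumes "1 \<le> i" "i \<le> n - kidx hs n r"
  shows "hs i < Mthr hs n r"
proof -
  have "hs (n - kidx hs n r) < Mthr hs n r"
    using kidx_condition kidx_less by (simp add: Mthr_def field_simps)
  moreover have "hs i \<le> hs (n - kidx hs n r)" using assms by (intro hs_mono) auto
  ultimately show ?thesis by simp
qed

lemma Mthr_pos: "0 < Mthr hs n r"
proof -
  have "hs (n - r) < Mthr hs n r" using kidx_less r_less by (intro less_Mthr) auto
  then show ?thesis using hs_pos by simp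
qed

lemma Mthr_le:
  assumes "n - kidx hs n r < i" "i \<le> n"
  shows "Mthr hs n r \<le> hs i"
proof -
  define k where "k = kidx hs n r"
  have "0 < k" using assms unfolding k_def by simp
  then have eqs: "n - (k - 1) = Suc (n - k)" "real (r - (k - 1)) = real (r - k) + 1"
    using kidx_less r_less unfolding k_def by auto
  have "(\<Sum>i=1..n - (k - 1). hs i) \<le> real (r - (k - 1)) * hs (n - (k - 1))"
    using kidx_minimal[of "k - 1", folded k_def] \<open>0 < k\<close> kidx_less unfolding k_def by simp
  then have "(\<Sum>i=1..Suc (n - k). hs i) \<le> (real (r - k) + 1) * hs (Suc (n - k))"
    unfolding eqs .
  then have "(\<Sum>i=1..n - k. hs i) \<le> real (r - k) * hs (Suc (n - k))"
    by (simp add: algebra_simps)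
  then have "Mthr hs n r \<le> hs (Suc (n - k))"
    using kidx_less unfolding Mthr_def k_def by (simp add: field_simps)
  also have "\<dots> \<le> hs i" using assms unfolding k_def by (intro hs_mono) auto
  finally show ?thesis .
qed

private lemma sum_split_kidx:
  "(\<Sum>i=1..n. f i) = (\<Sum>i=1..n - kidx hs n r. f i) + (\<Sum>i=Suc (n - kidx hs n r)..n. f i)"
proof -
  have "n - kidx hs n r + kidx hs n r = n" using kidx_less r_less by simp
  then show ?thesis
    using sum.ub_add_nat[of 1 "n - kidx hs n r" f "kidx hs n r"] by simp
qed

lemma sum_min_Mthr: "(\<Sum>i=1..n. min (hs i) (Mthr hs n r)) = real r * Mthr hs n r"
proof -
  define k M where "k = kidx hs n r" and "M = Mthr hs n r"
  have "(\<Sum>i=1..n. min (hs i) M) = (\<Sum>i=1..n - k. hs i) + (\<Sum>i=Suc (n - k)..n. M)"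
    unfolding sum_split_kidx k_def[symmetric] using less_Mthr Mthr_le
    by (intro arg_cong2[where f = "(+)"] sum.cong) (auto simp: k_def M_def)
  also have "(\<Sum>i=1..n - k. hs i) = real (r - k) * M"
    using kidx_less unfolding M_def Mthr_def k_def by simp
  also have "(\<Sum>i=Suc (n - k)..n. M) = real k * M"
    using kidx_less r_less unfolding k_def by simp
  finally show ?thesis
    using kidx_less unfolding M_def k_def by (simp add: algebra_simps)
qed

text \<open>A point with \<open>hs i = 0\<close> gets probability \<open>p i = 0\<close>; there both \<open>1 / p i\<close> and
  \<open>w i / hs i\<close> take the junk value \<open>0\<close>, which is harmless because \<open>w i = 0\<close>.\<close>

lemma sum_inverse_capped_weights:
  assumes p: "\<And>i. 1 \<le> i \<Longrightarrow> i \<le> n \<Longrightarrow> p i = min (hs i) (Mthr hs n r) / Mthr hs n r"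
    and w: "\<And>i. 1 \<le> i \<Longrightarrow> i \<le> n \<Longrightarrow> hs i = 0 \<Longrightarrow> w i = 0"
  shows "(\<Sum>i=1..n. (1 - p i) / p i * w i)
           = Mthr hs n r * (\<Sum>i=1..n - kidx hs n r. w i / hs i) - (\<Sum>i=1..n - kidx hs n r. w i)"
proof -
  define k M where "k = kidx hs n r" and "M = Mthr hs n r"
  have low: "(1 - p i) / p i * w i = M * (w i / hs i) - w i" if "1 \<le> i" "i \<le> n - k" for i
  proof (cases "hs i = 0")
    case True
    then show ?thesis using w p that by simp
  next
    case False
    moreover have "i \<le> n" using that by simp
    ultimately have "0 < hs i" using hs_nonneg[of i] that by simp
    have pi: "p i = hs i / M" using p[of i] less_Mthr[of i] that unfolding k_def M_def by simp
    show ?thesis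
      unfolding pi using \<open>0 < hs i\<close> Mthr_pos unfolding M_def by (simp add: field_simps)
  qed
  have high: "(1 - p i) / p i * w i = 0" if "Suc (n - k) \<le> i" "i \<le> n" for i
    using p[of i] Mthr_le[of i] Mthr_pos that unfolding k_def by simp
  have "(\<Sum>i=1..n - k. (1 - p i) / p i * w i) = (\<Sum>i=1..n - k. M * (w i / hs i) - w i)"
    using low by (intro sum.cong) auto
  moreover have "(\<Sum>i=Suc (n - k)..n. (1 - p i) / p i * w i) = 0"
    using high by (intro sum.neutral) auto
  ultimately show ?thesis
    unfolding sum_split_kidx k_def[symmetric] M_def[symmetric]
    by (simp add: sum_subtractf sum_distrib_left)
qed

end

lemma trace_sandwich_scores:
  fixes A :: "real^'n^'n" and n :: nat
  assumes "transpose A = A"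
    and hv: "\<forall>i<n. hv i = \<bar>e i\<bar> * sqrt (g i \<bullet> ((A ** A) *v g i))"
  shows "trace (A ** (c *\<^sub>R (\<Sum>i<n. (d i * (e i)^2) *\<^sub>R outer (g i) (g i))) ** A)
           = c * (\<Sum>i<n. d i * (hv i)^2)"
proof -
  have "(hv i)^2 = (e i)^2 * (g i \<bullet> ((A ** A) *v g i))" if "i < n" for i
    using hv quadratic_form_square_nonneg[OF assms(1), of "g i"] that by (simp add: power_mult_distrib)
  then show ?thesis
    by (simp add: trace_sandwich_sum_outer mult.assoc)
qed

lemma sum_inverse_sampling_probabilities:
  fixes hopt w \<pi> :: "nat \<Rightarrow> real" and \<sigma> :: "nat \<Rightarrow> nat" and n r :: nat
  defines "hs \<equiv> \<lambda>i. hopt (\<sigma> (i - 1))"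
  assumes \<sigma>_bij: "bij_betw \<sigma> {..<n} {..<n}"
    and \<sigma>_sorted: "\<forall>i j. i \<le> j \<longrightarrow> j < n \<longrightarrow> hopt (\<sigma> i) \<le> hopt (\<sigma> j)"
    and hopt_nonneg: "\<And>i. i < n \<Longrightarrow> 0 \<le> hopt i"
    and w_zero: "\<And>i. i < n \<Longrightarrow> hopt i = 0 \<Longrightarrow> w i = 0"
    and r: "1 \<le> r" "r < n" and pos: "0 < hopt (\<sigma> (n - r - 1))"
    and \<pi>_def: "\<forall>i<n. \<pi> i = real r * min (hopt i) (Mthr hs n r) / (\<Sum>j<n. min (hopt j) (Mthr hs n r))"
  shows "(\<Sum>i<n. (1 - \<pi> i) / \<pi> i * w i)
           = Mthr hs n r * (\<Sum>i=1..n - kidx hs n r. w (\<sigma> (i - 1)) / hs i)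
             - (\<Sum>i=1..n - kidx hs n r. w (\<sigma> (i - 1)))"
proof -
  define M where "M = Mthr hs n r"
  have \<sigma>_less: "\<sigma> (i - 1) < n" if "1 \<le> i" "i \<le> n" for i
    using \<sigma>_bij that by (auto simp: bij_betw_def)
  have hs_nonneg: "\<And>i. 1 \<le> i \<Longrightarrow> i \<le> n \<Longrightarrow> 0 \<le> hs i"
    and hs_mono: "\<And>i j. 1 \<le> i \<Longrightarrow> i \<le> j \<Longrightarrow> j \<le> n \<Longrightarrow> hs i \<le> hs j"
    and hs_pos: "0 < hs (n - r)"
    using hopt_nonneg \<sigma>_less \<sigma>_sorted pos r unfolding hs_def by (auto simp: diff_diff_add)
  have "(\<Sum>j<n. min (hopt j) M) = (\<Sum>i=1..n. min (hs i) M)"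
    using sum_bij_betw_shift[OF \<sigma>_bij, of "\<lambda>j. min (hopt j) M"] by (simp add: hs_def)
  also have "\<dots> = real r * M"
    unfolding M_def by (rule sum_min_Mthr[where hs = hs, OF hs_nonneg hs_mono r hs_pos])
  finally have \<pi>_sorted: "\<pi> (\<sigma> (i - 1)) = min (hs i) M / M" if "1 \<le> i" "i \<le> n" for i
    using \<pi>_def \<sigma>_less[OF that] r unfolding hs_def M_def by simp
  have "(\<Sum>i<n. (1 - \<pi> i) / \<pi> i * w i)
      = (\<Sum>i=1..n. (1 - \<pi> (\<sigma> (i - 1))) / \<pi> (\<sigma> (i - 1)) * w (\<sigma> (i - 1)))"
    by (rule sum_bij_betw_shift[OF \<sigma>_bij])
  also have "\<dots> = M * (\<Sum>i=1..n - kidx hs n r. w (\<sigma> (i - 1)) / hs i)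
                   - (\<Sum>i=1..n - kidx hs n r. w (\<sigma> (i - 1)))"
    unfolding M_def
    by (rule sum_inverse_capped_weights[where hs = hs, OF hs_nonneg hs_mono r hs_pos])
      (use \<pi>_sorted w_zero \<sigma>_less in \<open>auto simp: hs_def M_def\<close>)
  finally show ?thesis unfolding M_def .
qed

theorem lemma2:
  fixes n r :: nat
    and ys :: "'x \<Rightarrow> real^'q \<Rightarrow> real"
    and x :: "nat \<Rightarrow> 'x" and yp :: "nat \<Rightarrow> real"
    and \<Theta> :: "(real^'q) set" and th :: "real^'q"
    and g :: "nat \<Rightarrow> real^'q" and J :: "real^'q^'q"
    and hmV hmVc hopt :: "nat \<Rightarrow> real"
    and \<sigma> :: "nat \<Rightarrow> nat" and \<pi> :: "nat \<Rightarrow> real"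
  assumes th_in: "th \<in> \<Theta>"
    and th_min: "\<forall>\<theta>\<in>\<Theta>. loss n ys x yp th \<le> loss n ys x yp \<theta>"
    and grad: "\<forall>i<n. (ys (x i) has_derivative (\<lambda>d. g i \<bullet> d)) (at th)"
    and hess: "is_hessian_at (loss n ys x yp) J th"
    and J_inv: "invertible J"
    and hmV_def: "\<forall>i<n. hmV i = \<bar>yp i - ys (x i) th\<bar>
                     * sqrt (g i \<bullet> ((matrix_inv J ** matrix_inv J) *v g i))"
    and hmVc_def: "\<forall>i<n. hmVc i = \<bar>yp i - ys (x i) th\<bar> * sqrt (g i \<bullet> g i)"
    and opt: "hopt = hmV \<or> hopt = hmVc"
    and r_range: "1 \<le> r" "r \<le> n - 1"
    and \<sigma>_bij: "bij_betw \<sigma> {..<n} {..<n}"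
    and \<sigma>_sorted: "\<forall>i j. i \<le> j \<longrightarrow> j < n \<longrightarrow> hopt (\<sigma> i) \<le> hopt (\<sigma> j)"
    and pos: "hopt (\<sigma> (n - r - 1)) > 0"
    and \<pi>_def: "\<forall>i<n. \<pi> i = real r * min (hopt i) (Mthr (\<lambda>i. hopt (\<sigma> (i - 1))) n r)
                     / (\<Sum>j<n. min (hopt j) (Mthr (\<lambda>i. hopt (\<sigma> (i - 1))) n r))"
  shows "let hs = (\<lambda>i. hopt (\<sigma> (i - 1)));
             hv = (\<lambda>i. hmV (\<sigma> (i - 1)));
             k = kidx hs n r;
             V = (4 / real n ^ 2) *\<^sub>R (\<Sum>i<n. ((1 - \<pi> i) / \<pi> i * (yp i - ys (x i) th)^2)
                    *\<^sub>R outer (g i) (g i));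
             \<Sigma> = matrix_inv J ** V ** matrix_inv J
         in trace \<Sigma> = 4 / (real n ^ 2 * real (r - k)) * (\<Sum>i=1..n-k. hs i)
                         * (\<Sum>i=1..n-k. (hv i)^2 / hs i)
                       - 4 / real n ^ 2 * (\<Sum>i=1..n-k. (hv i)^2)
          \<and> (hopt = hmV \<longrightarrow>
               trace \<Sigma> = 4 / (real n ^ 2 * real (r - k)) * (\<Sum>i=1..n-k. hv i)^2
                         - 4 / real n ^ 2 * (\<Sum>i=1..n-k. (hv i)^2))"
proof -
  define A hs hv k
    where "A = matrix_inv J" and "hs = (\<lambda>i. hopt (\<sigma> (i - 1)))" and "hv = (\<lambda>i. hmV (\<sigma> (i - 1)))"
      and "k = kidx hs n r"
  define V where "V = (4 / real n ^ 2) *\<^sub>R (\<Sum>i<n. ((1 - \<pi> i) / \<pi> i * (yp i - ys (x i) th)^2)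
                    *\<^sub>R outer (g i) (g i))"
  have A_sym: "transpose A = A"
    using transpose_matrix_inv_symmetric[OF J_inv is_hessian_at_symmetric[OF hess]] by (simp add: A_def)
  have hopt_nonneg: "0 \<le> hopt i" and hopt_zero: "hopt i = 0 \<Longrightarrow> (hmV i)^2 = 0" if "i < n" for i
    using opt hmV_def hmVc_def quadratic_form_square_nonneg[OF A_sym, of "g i"] that
    unfolding A_def by auto
  have "trace (A ** V ** A) = 4 / real n ^ 2 * (\<Sum>i<n. (1 - \<pi> i) / \<pi> i * (hmV i)^2)"
    unfolding V_def using A_sym hmV_def unfolding A_def
    by (intro trace_sandwich_scores[where e = "\<lambda>i. yp i - ys (x i) th" and d = "\<lambda>i. (1 - \<pi> i) / \<pi> i"])
  also have "(\<Sum>i<n. (1 - \<pi> i) / \<pi> i * (hmV i)^2)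
      = Mthr hs n r * (\<Sum>i=1..n-k. (hv i)^2 / hs i) - (\<Sum>i=1..n-k. (hv i)^2)"
    unfolding hs_def hv_def k_def
    by (rule sum_inverse_sampling_probabilities[OF \<sigma>_bij \<sigma>_sorted hopt_nonneg hopt_zero])
      (use r_range pos \<pi>_def in auto)
  finally have "trace (A ** V ** A) = 4 / (real n ^ 2 * real (r - k)) * (\<Sum>i=1..n-k. hs i)
      * (\<Sum>i=1..n-k. (hv i)^2 / hs i) - 4 / real n ^ 2 * (\<Sum>i=1..n-k. (hv i)^2)"
    unfolding Mthr_def k_def[symmetric] by (simp add: right_diff_distrib mult.assoc)
  then show ?thesis
    by (simp add: Let_def A_def V_def hs_def hv_def k_def power2_eq_square)
qed

end
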